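(* In the setting below, suppose the data are generated under $H_1$: labels in group $0$ are i.i.d. with weight vector $\Pi^{(0)}=(\pi^{(0)}_1,\dots,\pi^{(0)}_K)$ and labels in group $1$ are i.i.d. with weight vector $\Pi^{(1)}=(\pi^{(1)}_1,\dots,\pi^{(1)}_K)$, where $\Pi^{(0)}\ne\Pi^{(1)}$. Let $\Pi^*=\lambda_0\Pi^{(0)}+(1-\lambda_0)\Pi^{(1)}$ with entries $\pi_k^*$. Then, as $N_0,N_1\to\infty$ with $\lambda_0$ fixed, \[\frac{\operatorname{pr}(H_0\mid C^{(0)},C^{(1)})}{\operatorname{pr}(H_1\mid C^{(0)},C^{(1)})}\sim c\,N^{\frac{K-1}{2}}\prod_{k=1}^K\left(\frac{\pi_k^{(0)}}{\pi_k^*}\right)^{-N\lambda_0\pi_k^{(0)}}\left(\frac{\pi_k^{(1)}}{\pi_k^*}\right)^{-N(1-\lambda_0)\pi_k^{(1)}}\exp\{O_p(N^{1/2})\}.\]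
   Context: Setting: fix $K\ge2$, $\alpha\in(0,\infty)^K$, $P_0\in(0,1)$. Two groups of subjects of sizes $N_0,N_1$, $N=N_0+N_1$, $0<\lambda_0=N_0/N<1$ fixed. Each subject has a component label in $\{1,\dots,K\}$; $C^{(0)},C^{(1)}$ are the labels of the two groups, $n_k^{(i)}$ the number of subjects in group $i$ with label $k$, $n_k=n_k^{(0)}+n_k^{(1)}$. The Bayesian model: with prior probability $P_0$, $H_0$ holds (common weight vector $\Pi\sim\mathrm{Dir}(\alpha)$ for both groups); with probability $1-P_0$, $H_1$ holds (independent $\Pi^{(0)},\Pi^{(1)}\sim\mathrm{Dir}(\alpha)$), labels i.i.d. given the weights. The posterior odds are \[\frac{\operatorname{pr}(H_0\mid C^{(0)},C^{(1)})}{\operatorname{pr}(H_1\mid C^{(0)},C^{(1)})}=\frac{P_0\,\beta(\alpha)\,\beta(\vec n+\alpha)}{(1-P_0)\,\beta(\vec n^{(0)}+\alpha)\,\beta(\vec n^{(1)}+\alpha)},\quad \beta(a)=\frac{\prod_k\Gamma(a_k)}{\Gamma(\sum_k a_k)}.\] Define $p_{0k}=n_k^{(0)}/N_0$, $p_{1k}=n_k^{(1)}/N_1$, $p_k=n_k/N$, $r_{0k}=p_{0k}/p_k$, $r_{1k}=p_{1k}/p_k$, and \[c=\frac{P_0}{1-P_0}\left\{\frac{\lambda_0(1-\lambda_0)}{2\pi}\right\}^{\frac{K-1}{2}}\prod_{k=1}^K p_k^{\alpha_k+1/2}(r_{0k}r_{1k})^{1/2-\alpha_k}\] (here $\pi=3.14159\ldots$).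 $O_p(N^{1/2})$ denotes a random quantity bounded in probability after division by $N^{1/2}$. *)

theory Defs
  imports "HOL-Probability.Probability"
begin

text \<open>Components are labelled 1..K; vectors indexed by components are functions nat => real.\<close>

definition dir_beta :: "nat \<Rightarrow> (nat \<Rightarrow> real) \<Rightarrow> real" where
  "dir_beta K a = (\<Prod>k\<in>{1..K}. Gamma (a k)) / Gamma (\<Sum>k\<in>{1..K}. a k)"

definition cat_pmf :: "nat \<Rightarrow> (nat \<Rightarrow> real) \<Rightarrow> nat pmf" where
  "cat_pmf K w = embed_pmf (\<lambda>k. if k \<in> {1..K} then w k else 0)"

definition sample_H1 :: "nat \<Rightarrow> nat \<Rightarrow> nat \<Rightarrow> (nat \<Rightarrow> real) \<Rightarrow> (nat \<Rightarrow> real)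
    \<Rightarrow> ((nat \<Rightarrow> nat) \<times> (nat \<Rightarrow> nat)) pmf" where
  "sample_H1 K N0 N1 w0 w1 =
     pair_pmf (Pi_pmf {0..<N0} 0 (\<lambda>_. cat_pmf K w0)) (Pi_pmf {0..<N1} 0 (\<lambda>_. cat_pmf K w1))"

definition cnt :: "nat \<Rightarrow> (nat \<Rightarrow> nat) \<Rightarrow> nat \<Rightarrow> nat" where
  "cnt M C k = card {j \<in> {0..<M}. C j = k}"

definition post_odds :: "nat \<Rightarrow> (nat \<Rightarrow> real) \<Rightarrow> real \<Rightarrow> nat \<Rightarrow> nat
    \<Rightarrow> (nat \<Rightarrow> nat) \<Rightarrow> (nat \<Rightarrow> nat) \<Rightarrow> real" where
  "post_odds K \<alpha> P0 N0 N1 C0 C1 =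
     (P0 * dir_beta K \<alpha> * dir_beta K (\<lambda>k. real (cnt N0 C0 k + cnt N1 C1 k) + \<alpha> k))
     / ((1 - P0) * dir_beta K (\<lambda>k. real (cnt N0 C0 k) + \<alpha> k)
                 * dir_beta K (\<lambda>k. real (cnt N1 C1 k) + \<alpha> k))"

definition c_const :: "nat \<Rightarrow> (nat \<Rightarrow> real) \<Rightarrow> real \<Rightarrow> nat \<Rightarrow> nat
    \<Rightarrow> (nat \<Rightarrow> nat) \<Rightarrow> (nat \<Rightarrow> nat) \<Rightarrow> real" where
  "c_const K \<alpha> P0 N0 N1 C0 C1 =
     (let N = N0 + N1; lam0 = real N0 / real N;
          p0 = (\<lambda>k. real (cnt N0 C0 k) / real N0);
          p1 = (\<lambda>k. real (cnt N1 C1 k) / real N1);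
          p = (\<lambda>k. real (cnt N0 C0 k + cnt N1 C1 k) / real N);
          r0 = (\<lambda>k. p0 k / p k); r1 = (\<lambda>k. p1 k / p k)
      in P0 / (1 - P0) * (lam0 * (1 - lam0) / (2 * pi)) powr ((real K - 1) / 2)
         * (\<Prod>k\<in>{1..K}. p k powr (\<alpha> k + 1/2) * (r0 k * r1 k) powr (1/2 - \<alpha> k)))"

definition approx_odds :: "nat \<Rightarrow> (nat \<Rightarrow> real) \<Rightarrow> real \<Rightarrow> (nat \<Rightarrow> real) \<Rightarrow> (nat \<Rightarrow> real)
    \<Rightarrow> nat \<Rightarrow> nat \<Rightarrow> (nat \<Rightarrow> nat) \<Rightarrow> (nat \<Rightarrow> nat) \<Rightarrow> real" where
  "approx_odds K \<alpha> P0 w0 w1 N0 N1 C0 C1 =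
     (let N = real (N0 + N1); lam0 = real N0 / N;
          ws = (\<lambda>k. lam0 * w0 k + (1 - lam0) * w1 k)
      in c_const K \<alpha> P0 N0 N1 C0 C1 * N powr ((real K - 1) / 2)
         * (\<Prod>k\<in>{1..K}. (w0 k / ws k) powr (- N * lam0 * w0 k)
                          * (w1 k / ws k) powr (- N * (1 - lam0) * w1 k)))"

end

theory Submission
  imports Defs "HOL-Real_Asymp.Real_Asymp"
begin

text \<open>
  Under \<open>H\<^sub>1\<close> the label counts are binomial, so by Hoeffding's inequality, with probability
  close to one, every count lies within \<open>T \<surd>N\<^sub>i\<close> of its mean.  On such typical samples the
  elementary Stirling bounds for \<open>ln \<Gamma>\<close> show that, up to \<open>O(log N)\<close>, the log posterior odds
  equal \<open>ln (P\<^sub>0 / (1 - P\<^sub>0)) + ln \<beta>(\<alpha>) - N J(p\<^sub>0, p\<^sub>1)\<close>, where \<open>J\<close> is the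
  \<open>\<lambda>\<^sub>0\<close>-weighted Jensen gap of \<open>t ln t\<close> at the empirical frequencies; the logarithm of the
  approximation is \<open>ln c + (K - 1)/2 ln N - N J(\<Pi>\<^sub>0, \<Pi>\<^sub>1)\<close>.  As \<open>t ln t\<close> is Lipschitz
  on \<open>[\<delta>, 1]\<close>, the two Jensen gaps differ by \<open>O(1/\<surd>N)\<close>, and \<open>ln c = O(1)\<close> because the
  frequencies stay in \<open>[\<delta>, 1]\<close>.
\<close>

section \<open>Stirling bounds for the Gamma function\<close>

lemma ln_fact_lower: "real n * ln (real n) - real n \<le> ln (fact n :: real)"
proof (induction n)
  case (Suc n)
  have "real n * (ln (real (Suc n)) - ln (real n)) \<le> 1"
  proof (cases "n = 0")
    case False
    then have "ln (real (Suc n)) - ln (real n) \<le> 1 / real n"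
      using ln_diff_le[of "real (Suc n)" "real n"] by simp
    with False show ?thesis by (simp add: field_simps)
  qed simp
  moreover have "ln (fact (Suc n) :: real) = ln (real (Suc n)) + ln (fact n)"
    by (simp add: ln_mult del: of_nat_Suc)
  ultimately show ?case using Suc.IH by (simp add: algebra_simps)
qed simp

lemma ln_fact_upper:
  "n \<ge> 1 \<Longrightarrow> ln (fact n :: real) \<le> real n * ln (real n) - real n + 1 + ln (real n)"
proof (induction n rule: dec_induct)
  case (step n)
  have "ln (real n) - ln (real (Suc n)) \<le> - 1 / real (Suc n)"
    using ln_diff_le[of "real n" "real (Suc n)"] step.hyps by (simp add: diff_divide_distrib)
  then have "1 \<le> real (Suc n) * (ln (real (Suc n)) - ln (real n))"
    by (simp add: field_simps del: of_nat_Suc)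
  moreover have "ln (fact (Suc n) :: real) = ln (real (Suc n)) + ln (fact n)"
    by (simp add: ln_mult del: of_nat_Suc)
  ultimately show ?case using step.IH by (simp add: algebra_simps)
qed simp

definition xlnx :: "real \<Rightarrow> real" where
  "xlnx t = t * ln t"

lemma xlnx_diff_bounds:
  assumes "0 < a" "a \<le> b"
  shows "(b - a) * (ln a + 1) \<le> xlnx b - xlnx a" "xlnx b - xlnx a \<le> (b - a) * (ln b + 1)"
proof -
  have deriv: "(xlnx has_real_derivative ln t + 1) (at t)" if "0 < t" for t
    unfolding xlnx_def[abs_def] using that by (auto intro!: derivative_eq_intros)
  have "\<exists>z. a \<le> z \<and> z \<le> b \<and> xlnx b - xlnx a = (b - a) * (ln z + 1)"
  proof (cases "a = b")
    case False
    have "\<exists>z>a. z < b \<and> xlnx b - xlnx a = (b - a) * (ln z + 1)"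
      by (rule MVT2) (use False assms deriv in auto)
    then show ?thesis by (auto intro: less_imp_le)
  qed auto
  then obtain z where z: "a \<le> z" "z \<le> b" "xlnx b - xlnx a = (b - a) * (ln z + 1)" by blast
  have "ln a \<le> ln z" "ln z \<le> ln b" using z assms by auto
  then show "(b - a) * (ln a + 1) \<le> xlnx b - xlnx a" "xlnx b - xlnx a \<le> (b - a) * (ln b + 1)"
    unfolding z(3) using assms by (auto intro: mult_left_mono)
qed

lemma ln_Gamma_stirling:
  assumes x: "x \<ge> 2"
  shows "\<bar>ln (Gamma x) - (xlnx x - x)\<bar> \<le> 2 + 2 * ln x"
proof -
  define j where "j = nat \<lfloor>x\<rfloor>"
  have jx: "real j \<le> x" "x < real j + 1" and j2: "j \<ge> 2"
    using x unfolding j_def by linarith+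
  have "Gamma (real j) \<le> Gamma x" "Gamma x \<le> Gamma (real j + 1)"
    using jx j2 Gamma_real_strict_mono[of "real j" x] Gamma_real_strict_mono[of x "real j + 1"]
    by (cases "real j = x"; force)+
  moreover have "Gamma (real j + 1) = fact j" "Gamma (real j) = fact (j - 1)"
    using Gamma_fact[of j] Gamma_fact[of "j - 1"] j2 by (simp_all add: add.commute of_nat_diff)
  ultimately have "fact (j - 1) \<le> Gamma x" "Gamma x \<le> fact j" by simp_all
  moreover have "0 < Gamma x" using x by simp
  ultimately have "ln (fact (j - 1)) \<le> ln (Gamma x)" "ln (Gamma x) \<le> ln (fact j)"
    by (subst ln_le_cancel_iff; simp)+
  moreover have "ln (fact j :: real) = ln (real j) + ln (fact (j - 1))"
    using j2 by (simp add: fact_reduce[of j] ln_mult)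
  ultimately have Gamma_bounds: "ln (fact j) - ln (real j) \<le> ln (Gamma x)" "ln (Gamma x) \<le> ln (fact j)"
    by simp_all
  have "(x - j) * (ln j + 1) \<le> xlnx x - xlnx j" "xlnx x - xlnx j \<le> (x - j) * (ln x + 1)"
    using xlnx_diff_bounds[of j x] jx j2 by simp_all
  moreover have "0 \<le> (x - j) * ln j" "(x - j) * ln x \<le> ln x"
    using jx j2 x mult_right_mono[of "x - j" 1 "ln x"] by simp_all
  ultimately have "0 \<le> xlnx x - x - (xlnx j - j)" "xlnx x - x - (xlnx j - j) \<le> ln x"
    by (simp_all add: distrib_left)
  moreover have "ln (real j) \<le> ln x" using jx j2 by simp
  ultimately show ?thesis
    using Gamma_bounds ln_fact_lower[of j] ln_fact_upper[of j] j2 x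
    unfolding xlnx_def abs_le_iff by linarith
qed

lemma ln_Gamma_stirling_shift:
  assumes x: "x \<ge> 2" and a: "a \<ge> 0"
  shows "\<bar>ln (Gamma (x + a)) - (xlnx x - x)\<bar> \<le> (2 + a) * (1 + ln (x + a))"
proof -
  have "\<bar>ln (Gamma (x + a)) - (xlnx (x + a) - (x + a))\<bar> \<le> 2 + 2 * ln (x + a)"
    using x a by (intro ln_Gamma_stirling) simp
  moreover have "a * ln x + a \<le> xlnx (x + a) - xlnx x" "xlnx (x + a) - xlnx x \<le> a * ln (x + a) + a"
    using xlnx_diff_bounds[of x "x + a"] x a by (simp_all add: distrib_left)
  moreover have "0 \<le> a * ln x" "0 \<le> a * ln (x + a)" using x a by simp_all
  moreover have "2 + 2 * ln (x + a) + a + a * ln (x + a) \<le> (2 + a) * (1 + ln (x + a))"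
    by (simp add: algebra_simps)
  ultimately show ?thesis using a unfolding abs_le_iff by linarith
qed

lemma sum_abs_diff_le:
  assumes "\<And>i. i \<in> I \<Longrightarrow> \<bar>f i - g i\<bar> \<le> (e i :: real)"
  shows "\<bar>sum f I - sum g I\<bar> \<le> sum e I"
proof -
  have "\<bar>sum f I - sum g I\<bar> \<le> (\<Sum>i\<in>I. \<bar>f i - g i\<bar>)"
    unfolding sum_subtractf[symmetric] by (rule sum_abs)
  also have "\<dots> \<le> sum e I" using assms by (intro sum_mono)
  finally show ?thesis .
qed

lemma dir_beta_pos: "K \<ge> 1 \<Longrightarrow> (\<And>k. k \<in> {1..K} \<Longrightarrow> a k > 0) \<Longrightarrow> dir_beta K a > 0"
  unfolding dir_beta_def by (intro divide_pos_pos prod_pos Gamma_real_pos sum_pos) auto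

lemma ln_dir_beta:
  assumes "K \<ge> 1" "\<And>k. k \<in> {1..K} \<Longrightarrow> a k > 0"
  shows "ln (dir_beta K a) = (\<Sum>k\<in>{1..K}. ln (Gamma (a k))) - ln (Gamma (\<Sum>k\<in>{1..K}. a k))"
proof -
  have "(\<Sum>k\<in>{1..K}. a k) > 0" using assms by (intro sum_pos) auto
  moreover have Gamma_pos: "Gamma (a k) > 0" if "k \<in> {1..K}" for k using assms(2)[OF that] by simp
  moreover have "(\<Prod>k\<in>{1..K}. Gamma (a k)) > 0" using Gamma_pos by (intro prod_pos) auto
  moreover have "ln (\<Prod>k\<in>{1..K}. Gamma (a k)) = (\<Sum>k\<in>{1..K}. ln (Gamma (a k)))"
    using Gamma_pos by (intro ln_prod) force+
  ultimately show ?thesis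
    unfolding dir_beta_def by (simp add: ln_divide_pos)
qed

lemma ln_dir_beta_stirling:
  assumes K: "K \<ge> 1" and z: "\<And>k. k \<in> {1..K} \<Longrightarrow> z k \<ge> 2"
    and \<alpha>: "\<And>k. k \<in> {1..K} \<Longrightarrow> \<alpha> k \<ge> 0"
  defines "Z \<equiv> \<Sum>k\<in>{1..K}. z k" and "A \<equiv> \<Sum>k\<in>{1..K}. \<alpha> k"
  shows "\<bar>ln (dir_beta K (\<lambda>k. z k + \<alpha> k)) - ((\<Sum>k\<in>{1..K}. xlnx (z k)) - xlnx Z)\<bar>
           \<le> (2 * real K + 2 * A + 2) * (1 + ln (Z + A))"
proof -
  define Q where "Q = 1 + ln (Z + A)"
  have "z k \<ge> 0" if "k \<in> {1..K}" for k using z[OF that] by linarith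
  then have le_Z: "z k \<le> Z" and le_A: "\<alpha> k \<le> A" if "k \<in> {1..K}" for k
    unfolding Z_def A_def using that \<alpha> by (auto intro!: member_le_sum)
  then have "\<bar>ln (Gamma (z k + \<alpha> k)) - (xlnx (z k) - z k)\<bar> \<le> (2 + \<alpha> k) * Q"
    if k: "k \<in> {1..K}" for k
  proof -
    have "1 + ln (z k + \<alpha> k) \<le> Q"
      unfolding Q_def using z[OF k] \<alpha>[OF k] le_Z[OF k] le_A[OF k] by simp
    then show ?thesis
      using ln_Gamma_stirling_shift[of "z k" "\<alpha> k"] z[OF k] \<alpha>[OF k]
        mult_left_mono[of "1 + ln (z k + \<alpha> k)" Q "2 + \<alpha> k"] by linarith
  qed
  then have "\<bar>(\<Sum>k\<in>{1..K}. ln (Gamma (z k + \<alpha> k))) - (\<Sum>k\<in>{1..K}. xlnx (z k) - z k)\<bar>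
      \<le> (\<Sum>k\<in>{1..K}. (2 + \<alpha> k) * Q)"
    by (rule sum_abs_diff_le)
  also have "(\<Sum>k\<in>{1..K}. (2 + \<alpha> k) * Q) = (2 * real K + A) * Q"
    by (simp add: A_def sum.distrib flip: sum_distrib_right)
  moreover have "Z \<ge> 2" using z[of 1] le_Z[of 1] K by force
  then have "\<bar>ln (Gamma (Z + A)) - (xlnx Z - Z)\<bar> \<le> (2 + A) * Q"
    unfolding Q_def A_def using \<alpha> by (intro ln_Gamma_stirling_shift sum_nonneg) auto
  moreover have "ln (dir_beta K (\<lambda>k. z k + \<alpha> k))
      = (\<Sum>k\<in>{1..K}. ln (Gamma (z k + \<alpha> k))) - ln (Gamma (Z + A))"
  proof -
    have pos: "z k + \<alpha> k > 0" if "k \<in> {1..K}" for k using z[OF that] \<alpha>[OF that] by linarith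
    have "ln (dir_beta K (\<lambda>k. z k + \<alpha> k))
        = (\<Sum>k\<in>{1..K}. ln (Gamma (z k + \<alpha> k))) - ln (Gamma (\<Sum>k\<in>{1..K}. z k + \<alpha> k))"
      using K pos by (rule ln_dir_beta)
    then show ?thesis by (simp add: Z_def A_def sum.distrib)
  qed
  moreover have "(\<Sum>k\<in>{1..K}. xlnx (z k) - z k) = (\<Sum>k\<in>{1..K}. xlnx (z k)) - Z"
    by (simp add: Z_def sum_subtractf)
  moreover have "(2 * real K + 2 * A + 2) * Q = (2 * real K + A) * Q + (2 + A) * Q"
    by (simp add: algebra_simps)
  ultimately show ?thesis unfolding Q_def[symmetric] abs_le_iff by linarith
qed

section \<open>The Jensen gap of t ln t\<close>

text \<open>Summed over the components of two probability vectors, \<open>jensen_gap lam\<close> is their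
  \<open>lam\<close>-weighted Jensen--Shannon divergence.\<close>

definition jensen_gap :: "real \<Rightarrow> real \<Rightarrow> real \<Rightarrow> real" where
  "jensen_gap lam u v = lam * xlnx u + (1 - lam) * xlnx v - xlnx (lam * u + (1 - lam) * v)"

lemma xlnx_lipschitz:
  assumes "0 < d" "d \<le> u" "u \<le> 1" "d \<le> v" "v \<le> 1"
  shows "\<bar>xlnx u - xlnx v\<bar> \<le> (1 - ln d) * \<bar>u - v\<bar>"
proof -
  have *: "\<bar>xlnx b - xlnx a\<bar> \<le> (1 - ln d) * (b - a)" if "d \<le> a" "a \<le> b" "b \<le> 1" for a b
  proof -
    have "ln d \<le> 0" "ln b \<le> 0" "ln d \<le> ln a" using assms that by simp_all
    then have "ln d + 1 \<le> ln a + 1" "ln b + 1 \<le> 1 - ln d" by linarith+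
    then have "(b - a) * (ln d - 1) \<le> (b - a) * (ln a + 1)"
      "(b - a) * (ln b + 1) \<le> (b - a) * (1 - ln d)"
      using that by (intro mult_left_mono; simp)+
    moreover have "(b - a) * (ln d - 1) = - ((1 - ln d) * (b - a))" by (simp add: algebra_simps)
    ultimately show ?thesis
      using xlnx_diff_bounds[of a b] that assms(1) by (simp add: abs_le_iff mult.commute)
  qed
  show ?thesis
    using *[of u v] *[of v u] assms by (cases "u \<le> v") (auto simp: abs_minus_commute)
qed

lemma jensen_gap_lipschitz:
  assumes lam: "0 \<le> lam" "lam \<le> 1" and d: "0 < d"
    and uv: "d \<le> u" "u \<le> 1" "d \<le> v" "v \<le> 1" "d \<le> u'" "u' \<le> 1" "d \<le> v'" "v' \<le> 1"
  shows "\<bar>jensen_gap lam u v - jensen_gap lam u' v'\<bar>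
           \<le> 2 * (1 - ln d) * (lam * \<bar>u - u'\<bar> + (1 - lam) * \<bar>v - v'\<bar>)"
proof -
  define L where "L = 1 - ln d"
  define m where "m = lam * u + (1 - lam) * v"
  define m' where "m' = lam * u' + (1 - lam) * v'"
  define D where "D = lam * \<bar>u - u'\<bar> + (1 - lam) * \<bar>v - v'\<bar>"
  have convex: "d \<le> lam * a + (1 - lam) * b \<and> lam * a + (1 - lam) * b \<le> 1"
    if "d \<le> a" "a \<le> 1" "d \<le> b" "b \<le> 1" for a b
    using convex_bound_le[of a 1 b lam "1 - lam"] convex_bound_le[of "-a" "-d" "-b" lam "1 - lam"]
      that lam by auto
  have tri: "\<bar>lam * p + (1 - lam) * q\<bar> \<le> lam * \<bar>p\<bar> + (1 - lam) * \<bar>q\<bar>" for p q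
    using abs_triangle_ineq[of "lam * p" "(1 - lam) * q"] lam by (simp add: abs_mult)
  have "m - m' = lam * (u - u') + (1 - lam) * (v - v')"
    unfolding m_def m'_def by (simp add: algebra_simps)
  then have "\<bar>m - m'\<bar> \<le> D" using tri unfolding D_def by simp
  moreover have "L \<ge> 0" unfolding L_def using d uv ln_le_minus_one[of d] by linarith
  moreover have "\<bar>xlnx m - xlnx m'\<bar> \<le> L * \<bar>m - m'\<bar>"
    using xlnx_lipschitz[of d m m'] convex[of u v] convex[of u' v'] uv d
    unfolding L_def m_def m'_def by blast
  ultimately have "\<bar>xlnx m - xlnx m'\<bar> \<le> L * D" by (meson mult_left_mono order_trans)
  moreover have "\<bar>lam * (xlnx u - xlnx u') + (1 - lam) * (xlnx v - xlnx v')\<bar> \<le> L * D"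
  proof -
    have "\<bar>xlnx u - xlnx u'\<bar> \<le> L * \<bar>u - u'\<bar>" "\<bar>xlnx v - xlnx v'\<bar> \<le> L * \<bar>v - v'\<bar>"
      unfolding L_def using uv d by (intro xlnx_lipschitz; simp)+
    then have "lam * \<bar>xlnx u - xlnx u'\<bar> + (1 - lam) * \<bar>xlnx v - xlnx v'\<bar>
        \<le> lam * (L * \<bar>u - u'\<bar>) + (1 - lam) * (L * \<bar>v - v'\<bar>)"
      using lam by (intro add_mono mult_left_mono) auto
    also have "\<dots> = L * D" unfolding D_def by (simp add: algebra_simps)
    finally show ?thesis using tri order_trans by blast
  qed
  moreover have "jensen_gap lam u v - jensen_gap lam u' v'
      = (lam * (xlnx u - xlnx u') + (1 - lam) * (xlnx v - xlnx v')) - (xlnx m - xlnx m')"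
    unfolding jensen_gap_def m_def m'_def by (simp add: algebra_simps)
  ultimately show ?thesis unfolding L_def[symmetric] D_def[symmetric] abs_le_iff by linarith
qed

lemma sum_xlnx_eq:
  assumes "finite I" "\<And>i. i \<in> I \<Longrightarrow> z i > 0"
  shows "(\<Sum>i\<in>I. xlnx (z i)) - xlnx (sum z I) = sum z I * (\<Sum>i\<in>I. xlnx (z i / sum z I))"
proof (cases "I = {}")
  case False
  define Z where "Z = sum z I"
  have Z: "Z > 0" unfolding Z_def using assms False by (intro sum_pos) auto
  have "xlnx (z i) = Z * xlnx (z i / Z) + z i * ln Z" if "i \<in> I" for i
    using assms(2)[OF that] Z by (simp add: xlnx_def ln_div algebra_simps)
  then have "(\<Sum>i\<in>I. xlnx (z i)) = Z * (\<Sum>i\<in>I. xlnx (z i / Z)) + Z * ln Z"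
    by (simp add: sum.distrib sum_distrib_left sum_distrib_right Z_def)
  then show ?thesis by (simp add: Z_def xlnx_def)
qed (simp add: xlnx_def)

lemma sum_xlnx_mixture:
  assumes "finite I" "I \<noteq> {}" "\<And>i. i \<in> I \<Longrightarrow> x i > 0" "\<And>i. i \<in> I \<Longrightarrow> y i > 0"
  defines "n0 \<equiv> sum x I" and "n1 \<equiv> sum y I"
  shows "((\<Sum>i\<in>I. xlnx (x i + y i)) - xlnx (n0 + n1)) - ((\<Sum>i\<in>I. xlnx (x i)) - xlnx n0)
           - ((\<Sum>i\<in>I. xlnx (y i)) - xlnx n1)
         = - ((n0 + n1) * (\<Sum>i\<in>I. jensen_gap (n0 / (n0 + n1)) (x i / n0) (y i / n1)))"
proof -
  have n: "n0 > 0" "n1 > 0" unfolding n0_def n1_def using assms by (auto intro!: sum_pos)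
  define lam where "lam = n0 / (n0 + n1)"
  have "1 - lam = n1 / (n0 + n1)" using n by (simp add: lam_def field_simps)
  then have mix: "(x i + y i) / (n0 + n1) = lam * (x i / n0) + (1 - lam) * (y i / n1)" for i
    using n by (simp add: lam_def add_divide_distrib)
  define S where "S = (\<Sum>i\<in>I. xlnx (lam * (x i / n0) + (1 - lam) * (y i / n1)))"
  define S0 where "S0 = (\<Sum>i\<in>I. xlnx (x i / n0))"
  define S1 where "S1 = (\<Sum>i\<in>I. xlnx (y i / n1))"
  have "sum (\<lambda>i. x i + y i) I = n0 + n1" by (simp add: n0_def n1_def sum.distrib)
  then have "(\<Sum>i\<in>I. xlnx (x i + y i)) - xlnx (n0 + n1) = (n0 + n1) * S"
    using sum_xlnx_eq[of I "\<lambda>i. x i + y i"] assms(1,3,4) by (simp add: S_def mix add_pos_pos)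
  moreover have "(\<Sum>i\<in>I. xlnx (x i)) - xlnx n0 = (n0 + n1) * (lam * S0)"
    using sum_xlnx_eq[of I x] assms(1,3) n unfolding n0_def lam_def S0_def by simp
  moreover have "(\<Sum>i\<in>I. xlnx (y i)) - xlnx n1 = (n0 + n1) * ((1 - lam) * S1)"
    using sum_xlnx_eq[of I y] assms(1,4) n \<open>1 - lam = n1 / (n0 + n1)\<close>
    unfolding n1_def S1_def by simp
  moreover have "(\<Sum>i\<in>I. jensen_gap lam (x i / n0) (y i / n1)) = lam * S0 + (1 - lam) * S1 - S"
    unfolding jensen_gap_def S_def S0_def S1_def
    by (simp add: sum_subtractf sum.distrib sum_distrib_left)
  ultimately show ?thesis unfolding lam_def[symmetric] by (simp only:) (simp add: algebra_simps)
qed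

lemma ln_dir_beta_ratio_stirling:
  assumes K: "K \<ge> 1" and x: "\<And>k. k \<in> {1..K} \<Longrightarrow> x k \<ge> 2"
    and y: "\<And>k. k \<in> {1..K} \<Longrightarrow> y k \<ge> 2" and \<alpha>: "\<And>k. k \<in> {1..K} \<Longrightarrow> \<alpha> k \<ge> 0"
  defines "n0 \<equiv> \<Sum>k\<in>{1..K}. x k" and "n1 \<equiv> \<Sum>k\<in>{1..K}. y k"
    and "A \<equiv> \<Sum>k\<in>{1..K}. \<alpha> k"
  shows "\<bar>ln (dir_beta K (\<lambda>k. x k + y k + \<alpha> k)) - ln (dir_beta K (\<lambda>k. x k + \<alpha> k))
            - ln (dir_beta K (\<lambda>k. y k + \<alpha> k))
            + (n0 + n1) * (\<Sum>k\<in>{1..K}. jensen_gap (n0 / (n0 + n1)) (x k / n0) (y k / n1))\<bar>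
         \<le> 3 * ((2 * real K + 2 * A + 2) * (1 + ln (n0 + n1 + A)))"
proof -
  define B where "B = (2 * real K + 2 * A + 2) * (1 + ln (n0 + n1 + A))"
  have "x k \<ge> 0" "y k \<ge> 0" if "k \<in> {1..K}" for k using x[OF that] y[OF that] by simp_all
  then have nonneg: "n0 \<ge> 0" "n1 \<ge> 0" "A \<ge> 0"
    unfolding n0_def n1_def A_def using \<alpha> by (auto intro!: sum_nonneg)
  have B0: "2 * real K + 2 * A + 2 \<ge> 0" using nonneg by simp
  have "(\<Sum>k\<in>{1..K}. x k + y k) = n0 + n1" by (simp add: n0_def n1_def sum.distrib)
  then have "\<bar>ln (dir_beta K (\<lambda>k. x k + y k + \<alpha> k))
      - ((\<Sum>k\<in>{1..K}. xlnx (x k + y k)) - xlnx (n0 + n1))\<bar> \<le> B"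
    using ln_dir_beta_stirling[of K "\<lambda>k. x k + y k" \<alpha>] K x y \<alpha>
    unfolding B_def A_def by force
  moreover have "\<bar>ln (dir_beta K (\<lambda>k. x k + \<alpha> k)) - ((\<Sum>k\<in>{1..K}. xlnx (x k)) - xlnx n0)\<bar> \<le> B"
  proof -
    have "1 + ln (n0 + A) \<le> 1 + ln (n0 + n1 + A)"
      using nonneg x[of 1] K member_le_sum[of 1 "{1..K}" x] x by (force simp: n0_def)
    then show ?thesis
      using ln_dir_beta_stirling[of K x \<alpha>] K x \<alpha> mult_left_mono[OF _ B0]
      unfolding B_def n0_def A_def by (meson order_trans)
  qed
  moreover have "\<bar>ln (dir_beta K (\<lambda>k. y k + \<alpha> k)) - ((\<Sum>k\<in>{1..K}. xlnx (y k)) - xlnx n1)\<bar> \<le> B"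
  proof -
    have "1 + ln (n1 + A) \<le> 1 + ln (n0 + n1 + A)"
      using nonneg y[of 1] K member_le_sum[of 1 "{1..K}" y] y by (force simp: n1_def)
    then show ?thesis
      using ln_dir_beta_stirling[of K y \<alpha>] K y \<alpha> mult_left_mono[OF _ B0]
      unfolding B_def n1_def A_def by (meson order_trans)
  qed
  moreover have "((\<Sum>k\<in>{1..K}. xlnx (x k + y k)) - xlnx (n0 + n1)) - ((\<Sum>k\<in>{1..K}. xlnx (x k)) - xlnx n0)
           - ((\<Sum>k\<in>{1..K}. xlnx (y k)) - xlnx n1)
         = - ((n0 + n1) * (\<Sum>k\<in>{1..K}. jensen_gap (n0 / (n0 + n1)) (x k / n0) (y k / n1)))"
    unfolding n0_def n1_def using K x y by (intro sum_xlnx_mixture) force+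
  ultimately show ?thesis unfolding B_def[symmetric] abs_le_iff by linarith
qed

section \<open>Posterior odds and their approximation\<close>

lemma cnt_le: "cnt N C k \<le> N"
  unfolding cnt_def by (rule order_trans[OF card_mono[of "{0..<N}"]]) auto

lemma sum_cnt:
  assumes "\<forall>j<N. C j \<in> {1..K}"
  shows "(\<Sum>k\<in>{1..K}. cnt N C k) = N"
proof -
  have "(\<Sum>k\<in>{1..K}. cnt N C k) = card (\<Union>k\<in>{1..K}. {j \<in> {0..<N}. C j = k})"
    unfolding cnt_def by (rule card_UN_disjoint[symmetric]) auto
  also have "(\<Union>k\<in>{1..K}. {j \<in> {0..<N}. C j = k}) = {0..<N}" using assms by auto
  finally show ?thesis by simp
qed

lemma ln_post_odds:
  fixes N0 N1 :: nat and C0 C1 :: "nat \<Rightarrow> nat"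
  assumes K: "K \<ge> 1" and \<alpha>: "\<And>k. k \<in> {1..K} \<Longrightarrow> \<alpha> k > 0" and P0: "0 < P0" "P0 < 1"
  defines "x \<equiv> \<lambda>k. real (cnt N0 C0 k)" and "y \<equiv> \<lambda>k. real (cnt N1 C1 k)"
  shows "post_odds K \<alpha> P0 N0 N1 C0 C1 > 0"
    and "ln (post_odds K \<alpha> P0 N0 N1 C0 C1) = ln (P0 / (1 - P0)) + ln (dir_beta K \<alpha>)
           + ln (dir_beta K (\<lambda>k. x k + y k + \<alpha> k)) - ln (dir_beta K (\<lambda>k. x k + \<alpha> k))
           - ln (dir_beta K (\<lambda>k. y k + \<alpha> k))"
proof -
  define d where "d = dir_beta K \<alpha>"
  define d01 where "d01 = dir_beta K (\<lambda>k. x k + y k + \<alpha> k)"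
  define d0 where "d0 = dir_beta K (\<lambda>k. x k + \<alpha> k)"
  define d1 where "d1 = dir_beta K (\<lambda>k. y k + \<alpha> k)"
  have pos: "d > 0" "d01 > 0" "d0 > 0" "d1 > 0"
    unfolding d_def d01_def d0_def d1_def x_def y_def
    using K \<alpha> by (auto intro!: dir_beta_pos add_nonneg_pos)
  have post: "post_odds K \<alpha> P0 N0 N1 C0 C1 = (P0 * d * d01) / ((1 - P0) * d0 * d1)"
    unfolding post_odds_def d_def d01_def d0_def d1_def x_def y_def by simp
  show "post_odds K \<alpha> P0 N0 N1 C0 C1 > 0" unfolding post using pos P0 by simp
  show "ln (post_odds K \<alpha> P0 N0 N1 C0 C1) = ln (P0 / (1 - P0)) + ln d + ln d01 - ln d0 - ln d1"
    unfolding post using pos P0 by (simp add: ln_mult_pos ln_divide_pos)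
qed

lemma ln_c_const_bound:
  fixes lam \<delta> :: real
  assumes \<alpha>: "\<And>k. k \<in> {1..K} \<Longrightarrow> \<alpha> k \<ge> 0" and P0: "0 < P0" "P0 < 1"
    and \<delta>: "0 < \<delta>" and N: "N0 > 0" "N1 > 0" and ratio: "real N0 = lam * real (N0 + N1)"
    and freq: "\<And>k. k \<in> {1..K} \<Longrightarrow> \<delta> * N0 \<le> real (cnt N0 C0 k) \<and> \<delta> * N1 \<le> real (cnt N1 C1 k)"
  shows "c_const K \<alpha> P0 N0 N1 C0 C1 > 0"
    and "\<bar>ln (c_const K \<alpha> P0 N0 N1 C0 C1)\<bar> \<le> \<bar>ln (P0 / (1 - P0))\<bar>
           + \<bar>(real K - 1) / 2 * ln (lam * (1 - lam) / (2 * pi))\<bar>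
           + 3 * (- ln \<delta>) * ((\<Sum>k\<in>{1..K}. \<alpha> k) + real K / 2)"
proof -
  define Nr where "Nr = real (N0 + N1)"
  define p0 where "p0 = (\<lambda>k. real (cnt N0 C0 k) / real N0)"
  define p1 where "p1 = (\<lambda>k. real (cnt N1 C1 k) / real N1)"
  define p where "p = (\<lambda>k. real (cnt N0 C0 k + cnt N1 C1 k) / Nr)"
  define f where "f = (\<lambda>k. p k powr (\<alpha> k + 1/2) * (p0 k / p k * (p1 k / p k)) powr (1/2 - \<alpha> k))"
  have Nr: "Nr > 0" "real N0 / Nr = lam"
    unfolding Nr_def using N ratio by (auto simp: divide_eq_eq mult.commute)
  have lam: "0 < lam" "lam < 1" unfolding Nr(2)[symmetric] using N by (simp_all add: Nr_def)
  have unit: "\<delta> \<le> c / n \<and> c / n \<le> 1" if "0 < n" "\<delta> * n \<le> c" "c \<le> n" for c n :: real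
    using that by (simp add: field_simps)
  have range: "\<delta> \<le> p k \<and> p k \<le> 1" "\<delta> \<le> p0 k \<and> p0 k \<le> 1" "\<delta> \<le> p1 k \<and> p1 k \<le> 1"
    if "k \<in> {1..K}" for k
  proof -
    have c: "\<delta> * real N0 \<le> real (cnt N0 C0 k)" "\<delta> * real N1 \<le> real (cnt N1 C1 k)"
      "real (cnt N0 C0 k) \<le> real N0" "real (cnt N1 C1 k) \<le> real N1"
      using freq[OF that] cnt_le[of N0 C0 k] cnt_le[of N1 C1 k] by auto
    show "\<delta> \<le> p k \<and> p k \<le> 1" unfolding p_def Nr_def using N c by (intro unit) (auto simp: distrib_left)
    show "\<delta> \<le> p0 k \<and> p0 k \<le> 1" unfolding p0_def using N c by (intro unit) auto
    show "\<delta> \<le> p1 k \<and> p1 k \<le> 1" unfolding p1_def using N c by (intro unit) auto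
  qed
  have ln_f: "\<bar>ln (f k)\<bar> \<le> 3 * (- ln \<delta>) * (\<alpha> k + 1/2)" and f_pos: "f k > 0"
    if k: "k \<in> {1..K}" for k
  proof -
    have pos: "p k > 0" "p0 k > 0" "p1 k > 0" using range[OF k] \<delta> by linarith+
    have bd: "\<bar>ln q\<bar> \<le> - ln \<delta>" "ln q \<le> 0" "ln \<delta> \<le> ln q" if "\<delta> \<le> q \<and> q \<le> 1" for q
      using that \<delta> by auto
    note bds = bd[OF range(1)[OF k]] bd[OF range(2)[OF k]] bd[OF range(3)[OF k]]
    define L u v where "L = - ln \<delta>" and "u = ln (p k)"
      and "v = (ln (p0 k) - ln (p k)) + (ln (p1 k) - ln (p k))"
    have uv: "\<bar>u\<bar> \<le> L" "\<bar>v\<bar> \<le> 2 * L" using bds unfolding L_def u_def v_def by auto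
    have "ln (f k) = (\<alpha> k + 1/2) * u + (1/2 - \<alpha> k) * v"
      unfolding f_def u_def v_def using pos by (simp add: ln_mult_pos ln_divide_pos)
    then have "\<bar>ln (f k)\<bar> \<le> (\<alpha> k + 1/2) * \<bar>u\<bar> + \<bar>1/2 - \<alpha> k\<bar> * \<bar>v\<bar>"
      using \<alpha>[OF k] abs_triangle_ineq[of "(\<alpha> k + 1/2) * u" "(1/2 - \<alpha> k) * v"]
      by (simp add: abs_mult)
    also have "\<dots> \<le> (\<alpha> k + 1/2) * L + (\<alpha> k + 1/2) * (2 * L)"
      using uv \<alpha>[OF k] by (intro add_mono mult_mono) auto
    also have "\<dots> = 3 * L * (\<alpha> k + 1/2)" by (simp add: algebra_simps)
    finally show "\<bar>ln (f k)\<bar> \<le> 3 * (- ln \<delta>) * (\<alpha> k + 1/2)" unfolding L_def .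
    show "f k > 0" unfolding f_def using pos by simp
  qed
  have c: "c_const K \<alpha> P0 N0 N1 C0 C1
      = P0 / (1 - P0) * (lam * (1 - lam) / (2 * pi)) powr ((real K - 1) / 2) * (\<Prod>k\<in>{1..K}. f k)"
    unfolding c_const_def Let_def f_def p_def p0_def p1_def Nr_def[symmetric] Nr(2) by simp
  have Q: "lam * (1 - lam) / (2 * pi) > 0" using lam by simp
  have prod_f: "(\<Prod>k\<in>{1..K}. f k) > 0" using f_pos by (intro prod_pos) auto
  have front: "P0 / (1 - P0) * (lam * (1 - lam) / (2 * pi)) powr ((real K - 1) / 2) > 0"
    using P0 Q lam by (intro mult_pos_pos divide_pos_pos) simp_all
  show "c_const K \<alpha> P0 N0 N1 C0 C1 > 0" unfolding c by (rule mult_pos_pos[OF front prod_f])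
  have "ln (c_const K \<alpha> P0 N0 N1 C0 C1) = ln (P0 / (1 - P0)
      * (lam * (1 - lam) / (2 * pi)) powr ((real K - 1) / 2)) + ln (\<Prod>k\<in>{1..K}. f k)"
    unfolding c by (rule ln_mult_pos[OF front prod_f])
  also have "ln (P0 / (1 - P0) * (lam * (1 - lam) / (2 * pi)) powr ((real K - 1) / 2))
      = ln (P0 / (1 - P0)) + (real K - 1) / 2 * ln (lam * (1 - lam) / (2 * pi))"
    using P0 Q lam by (subst ln_mult_pos) (simp_all add: ln_powr)
  also have "ln (\<Prod>k\<in>{1..K}. f k) = (\<Sum>k\<in>{1..K}. ln (f k))"
    using f_pos by (intro ln_prod) force+
  finally have "ln (c_const K \<alpha> P0 N0 N1 C0 C1) = ln (P0 / (1 - P0))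
      + (real K - 1) / 2 * ln (lam * (1 - lam) / (2 * pi)) + (\<Sum>k\<in>{1..K}. ln (f k))" .
  moreover have "\<bar>\<Sum>k\<in>{1..K}. ln (f k)\<bar> \<le> 3 * (- ln \<delta>) * ((\<Sum>k\<in>{1..K}. \<alpha> k) + real K / 2)"
  proof -
    have "\<bar>\<Sum>k\<in>{1..K}. ln (f k)\<bar> \<le> (\<Sum>k\<in>{1..K}. 3 * (- ln \<delta>) * (\<alpha> k + 1/2))"
      using ln_f by (intro order_trans[OF sum_abs] sum_mono) auto
    also have "\<dots> = 3 * (- ln \<delta>) * ((\<Sum>k\<in>{1..K}. \<alpha> k) + real K / 2)"
      by (subst sum_distrib_left[symmetric]) (simp add: sum.distrib)
    finally show ?thesis .
  qed
  ultimately show "\<bar>ln (c_const K \<alpha> P0 N0 N1 C0 C1)\<bar> \<le> \<bar>ln (P0 / (1 - P0))\<bar>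
           + \<bar>(real K - 1) / 2 * ln (lam * (1 - lam) / (2 * pi))\<bar>
           + 3 * (- ln \<delta>) * ((\<Sum>k\<in>{1..K}. \<alpha> k) + real K / 2)"
    by linarith
qed

lemma ln_approx_odds:
  fixes lam :: real
  assumes N: "N0 + N1 > 0" and ratio: "real N0 = lam * real (N0 + N1)"
    and w: "\<And>k. k \<in> {1..K} \<Longrightarrow> w0 k > 0 \<and> w1 k > 0"
    and c: "c_const K \<alpha> P0 N0 N1 C0 C1 > 0"
  shows "approx_odds K \<alpha> P0 w0 w1 N0 N1 C0 C1 > 0"
    and "ln (approx_odds K \<alpha> P0 w0 w1 N0 N1 C0 C1) = ln (c_const K \<alpha> P0 N0 N1 C0 C1)
           + (real K - 1) / 2 * ln (real (N0 + N1))
           - real (N0 + N1) * (\<Sum>k\<in>{1..K}. jensen_gap lam (w0 k) (w1 k))"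
proof -
  define Nr where "Nr = real (N0 + N1)"
  define ws where "ws = (\<lambda>k. lam * w0 k + (1 - lam) * w1 k)"
  define g where "g = (\<lambda>k. (w0 k / ws k) powr (- Nr * lam * w0 k) * (w1 k / ws k) powr (- Nr * (1 - lam) * w1 k))"
  have Nr: "Nr > 0" "real N0 / Nr = lam"
    unfolding Nr_def using N ratio by (auto simp: divide_eq_eq mult.commute)
  have lam: "0 \<le> lam" "lam \<le> 1"
    unfolding Nr(2)[symmetric] using Nr(1) by (simp_all add: Nr_def divide_le_eq)
  have ws: "ws k > 0" if "k \<in> {1..K}" for k
    unfolding ws_def using w[OF that] lam by (cases "lam = 0") (auto intro: add_pos_nonneg)
  have ln_g: "ln (g k) = - Nr * jensen_gap lam (w0 k) (w1 k)" and g_pos: "g k > 0"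
    if k: "k \<in> {1..K}" for k
  proof -
    show "g k > 0" unfolding g_def using w[OF k] ws[OF k] by simp
    have "ln (g k) = - Nr * (lam * w0 k * (ln (w0 k) - ln (ws k)) + (1 - lam) * w1 k * (ln (w1 k) - ln (ws k)))"
      unfolding g_def using w[OF k] ws[OF k] by (simp add: ln_mult_pos ln_divide_pos algebra_simps)
    also have "\<dots> = - Nr * jensen_gap lam (w0 k) (w1 k)"
      unfolding jensen_gap_def xlnx_def ws_def[symmetric] by (simp add: ws_def algebra_simps)
    finally show "ln (g k) = - Nr * jensen_gap lam (w0 k) (w1 k)" .
  qed
  have approx: "approx_odds K \<alpha> P0 w0 w1 N0 N1 C0 C1
      = c_const K \<alpha> P0 N0 N1 C0 C1 * Nr powr ((real K - 1) / 2) * (\<Prod>k\<in>{1..K}. g k)"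
    unfolding approx_odds_def Let_def g_def ws_def Nr_def[symmetric] Nr(2) by simp
  have "(\<Prod>k\<in>{1..K}. g k) > 0" using g_pos by (intro prod_pos) auto
  then show "approx_odds K \<alpha> P0 w0 w1 N0 N1 C0 C1 > 0" unfolding approx using c Nr by simp
  show "ln (approx_odds K \<alpha> P0 w0 w1 N0 N1 C0 C1) = ln (c_const K \<alpha> P0 N0 N1 C0 C1)
           + (real K - 1) / 2 * ln (real (N0 + N1))
           - real (N0 + N1) * (\<Sum>k\<in>{1..K}. jensen_gap lam (w0 k) (w1 k))"
  proof -
    have "ln (\<Prod>k\<in>{1..K}. g k) = (\<Sum>k\<in>{1..K}. ln (g k))"
      using g_pos by (intro ln_prod) force+
    also have "\<dots> = - Nr * (\<Sum>k\<in>{1..K}. jensen_gap lam (w0 k) (w1 k))"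
      unfolding sum_distrib_left by (rule sum.cong) (simp_all add: ln_g)
    finally show ?thesis
      unfolding approx Nr_def[symmetric] using c Nr \<open>(\<Prod>k\<in>{1..K}. g k) > 0\<close>
      by (simp add: ln_mult_pos ln_powr)
  qed
qed

section \<open>Typical samples\<close>

lemma weight_le_one:
  assumes "\<And>k. k \<in> {1..K} \<Longrightarrow> w k > 0" "(\<Sum>k\<in>{1..K}. w k) = (1 :: real)" "k \<in> {1..K}"
  shows "w k \<le> 1"
  using member_le_sum[of k "{1..K}" w] assms by (force intro: less_imp_le)

definition typical_labels :: "nat \<Rightarrow> real \<Rightarrow> (nat \<Rightarrow> real) \<Rightarrow> nat \<Rightarrow> (nat \<Rightarrow> nat) \<Rightarrow> bool" where
  "typical_labels K T w N C \<longleftrightarrow> (\<forall>j<N. C j \<in> {1..K}) \<and>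
     (\<forall>k\<in>{1..K}. \<bar>real (cnt N C k) - real N * w k\<bar> \<le> T * sqrt (real N))"

lemma deviation_lower_bound:
  fixes c n w \<delta> T :: real
  assumes dev: "\<bar>c - n * w\<bar> \<le> T * sqrt n" and w: "2 * \<delta> \<le> w" and n: "(T / \<delta>)\<^sup>2 \<le> n"
    and \<delta>: "0 < \<delta>" and T: "0 \<le> T"
  shows "\<delta> * n \<le> c"
proof -
  have "n \<ge> 0" using n by (meson order_trans zero_le_power2)
  have "T / \<delta> \<le> sqrt n" using n T \<delta> by (intro real_le_rsqrt) simp
  then have "T \<le> \<delta> * sqrt n" using \<delta> by (simp add: field_simps)
  then have "T * sqrt n \<le> \<delta> * n"
    using mult_right_mono[of T "\<delta> * sqrt n" "sqrt n"] \<open>n \<ge> 0\<close> by (simp add: mult.assoc)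
  moreover have "2 * (\<delta> * n) \<le> n * w"
    using mult_left_mono[OF w \<open>n \<ge> 0\<close>] by (simp add: algebra_simps)
  ultimately show ?thesis using dev unfolding abs_le_iff by linarith
qed

lemma sum_jensen_gap_deviation:
  fixes \<delta> T lam :: real
  assumes \<delta>: "0 < \<delta>" and T: "0 \<le> T" and N: "N0 > 0" "N1 > 0"
    and ratio: "real N0 = lam * real (N0 + N1)"
    and typ0: "typical_labels K T w0 N0 C0" and typ1: "typical_labels K T w1 N1 C1"
    and freq: "\<And>k. k \<in> {1..K} \<Longrightarrow> \<delta> * N0 \<le> real (cnt N0 C0 k) \<and> \<delta> * N1 \<le> real (cnt N1 C1 k)"
    and w: "\<And>k. k \<in> {1..K} \<Longrightarrow> \<delta> \<le> w0 k \<and> w0 k \<le> 1 \<and> \<delta> \<le> w1 k \<and> w1 k \<le> 1"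
  shows "\<bar>real (N0 + N1) * (\<Sum>k\<in>{1..K}. jensen_gap lam (cnt N0 C0 k / N0) (cnt N1 C1 k / N1))
           - real (N0 + N1) * (\<Sum>k\<in>{1..K}. jensen_gap lam (w0 k) (w1 k))\<bar>
         \<le> 4 * real K * (1 - ln \<delta>) * T * sqrt (real (N0 + N1))"
proof -
  define L where "L = 1 - ln \<delta>"
  define Nr where "Nr = real (N0 + N1)"
  define x where "x = (\<lambda>k. real (cnt N0 C0 k))"
  define y where "y = (\<lambda>k. real (cnt N1 C1 k))"
  have Nr: "Nr > 0" "Nr * lam = N0" "Nr * (1 - lam) = N1"
    using N ratio by (auto simp: Nr_def algebra_simps)
  then have "lam = real N0 / Nr" by (simp add: eq_divide_eq mult.commute)
  then have lam: "0 \<le> lam" "lam \<le> 1" using Nr(1) by (simp_all add: Nr_def divide_le_eq)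
  have scale: "real n * \<bar>c / real n - v\<bar> = \<bar>c - real n * v\<bar>" if "n > 0" for n :: nat and c v :: real
  proof -
    have "real n * \<bar>c / real n - v\<bar> = \<bar>real n * (c / real n - v)\<bar>" by (simp add: abs_mult)
    also have "real n * (c / real n - v) = c - real n * v" using that by (simp add: field_simps)
    finally show ?thesis .
  qed
  have "\<bar>Nr * jensen_gap lam (x k / N0) (y k / N1) - Nr * jensen_gap lam (w0 k) (w1 k)\<bar>
      \<le> 4 * L * T * sqrt Nr" if k: "k \<in> {1..K}" for k
  proof -
    have L: "L \<ge> 0" unfolding L_def using w[OF k] ln_le_minus_one[OF \<delta>] by linarith
    have "\<delta> \<le> x k / N0" "x k / N0 \<le> 1" "\<delta> \<le> y k / N1" "y k / N1 \<le> 1"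
      using freq[OF k] cnt_le[of N0 C0 k] cnt_le[of N1 C1 k] N
      by (simp_all add: x_def y_def field_simps)
    then have "\<bar>jensen_gap lam (x k / N0) (y k / N1) - jensen_gap lam (w0 k) (w1 k)\<bar>
        \<le> 2 * L * (lam * \<bar>x k / N0 - w0 k\<bar> + (1 - lam) * \<bar>y k / N1 - w1 k\<bar>)"
      unfolding L_def using w[OF k] lam \<delta> by (intro jensen_gap_lipschitz) auto
    then have "Nr * \<bar>jensen_gap lam (x k / N0) (y k / N1) - jensen_gap lam (w0 k) (w1 k)\<bar>
        \<le> Nr * (2 * L * (lam * \<bar>x k / N0 - w0 k\<bar> + (1 - lam) * \<bar>y k / N1 - w1 k\<bar>))"
      using Nr by (intro mult_left_mono) auto
    also have "\<dots> = 2 * L * (Nr * lam * \<bar>x k / N0 - w0 k\<bar> + Nr * (1 - lam) * \<bar>y k / N1 - w1 k\<bar>)"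
      by (simp add: algebra_simps)
    also have "\<dots> = 2 * L * (\<bar>x k - N0 * w0 k\<bar> + \<bar>y k - N1 * w1 k\<bar>)"
      unfolding Nr(2,3) scale[OF N(1)] scale[OF N(2)] ..
    also have "\<dots> \<le> 2 * L * (T * sqrt Nr + T * sqrt Nr)"
    proof -
      have "sqrt N0 \<le> sqrt Nr" "sqrt N1 \<le> sqrt Nr" by (simp_all add: Nr_def)
      then have "\<bar>x k - N0 * w0 k\<bar> \<le> T * sqrt Nr" "\<bar>y k - N1 * w1 k\<bar> \<le> T * sqrt Nr"
        using typ0 typ1 k T mult_left_mono[of "sqrt N0" "sqrt Nr" T] mult_left_mono[of "sqrt N1" "sqrt Nr" T]
        unfolding typical_labels_def x_def y_def by fastforce+
      then show ?thesis using L by (intro mult_left_mono add_mono) auto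
    qed
    finally show ?thesis using Nr by (simp add: abs_mult right_diff_distrib[symmetric])
  qed
  then have "\<bar>Nr * (\<Sum>k\<in>{1..K}. jensen_gap lam (x k / N0) (y k / N1))
      - Nr * (\<Sum>k\<in>{1..K}. jensen_gap lam (w0 k) (w1 k))\<bar> \<le> (\<Sum>k\<in>{1..K}. 4 * L * T * sqrt Nr)"
    unfolding sum_distrib_left by (rule sum_abs_diff_le)
  also have "(\<Sum>k\<in>{1..K}. 4 * L * T * sqrt Nr) = 4 * real K * (1 - ln \<delta>) * T * sqrt (real (N0 + N1))"
    by (simp add: L_def Nr_def)
  finally show ?thesis unfolding x_def y_def Nr_def .
qed

lemma one_plus_ln_le_sqrt:
  fixes N A :: real
  assumes "N \<ge> 1" "A \<ge> 0"
  shows "1 + ln (N + A) \<le> (3 + 2 * sqrt A) * sqrt N"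
proof -
  have "ln (sqrt (N + A)) \<le> sqrt (N + A) - 1" using assms by (intro ln_le_minus_one) simp
  then have "ln (N + A) \<le> 2 * sqrt (N + A)" using assms by (simp add: ln_sqrt)
  also have "sqrt (N + A) \<le> sqrt N + sqrt A"
    using assms by (intro real_le_lsqrt) (auto simp: power2_eq_square algebra_simps)
  finally have "1 + ln (N + A) \<le> 1 + 2 * sqrt N + 2 * sqrt A" by simp
  also have "\<dots> \<le> 3 * sqrt N + 2 * (sqrt A * sqrt N)"
  proof -
    have "1 \<le> sqrt N" using assms by simp
    moreover from this have "sqrt A \<le> sqrt A * sqrt N"
      using mult_left_mono[of 1 "sqrt N" "sqrt A"] assms by simp
    ultimately show ?thesis by linarith
  qed
  also have "\<dots> = (3 + 2 * sqrt A) * sqrt N" by (simp add: algebra_simps)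
  finally show ?thesis .
qed

lemma approx_odds_error_bound:
  fixes \<delta> T lam :: real
  assumes K: "K \<ge> 1" and \<alpha>: "\<And>k. k \<in> {1..K} \<Longrightarrow> \<alpha> k > 0" and P0: "0 < P0" "P0 < 1"
    and \<delta>: "0 < \<delta>" and T: "T \<ge> 0"
    and w: "\<And>k. k \<in> {1..K} \<Longrightarrow> \<delta> \<le> w0 k \<and> w0 k \<le> 1 \<and> \<delta> \<le> w1 k \<and> w1 k \<le> 1"
  obtains M where "\<And>N0 N1 C0 C1. real N0 = lam * real (N0 + N1) \<Longrightarrow>
      typical_labels K T w0 N0 C0 \<Longrightarrow> typical_labels K T w1 N1 C1 \<Longrightarrow>
      (\<And>k. k \<in> {1..K} \<Longrightarrow> 2 \<le> cnt N0 C0 k \<and> \<delta> * N0 \<le> real (cnt N0 C0 k)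
                           \<and> 2 \<le> cnt N1 C1 k \<and> \<delta> * N1 \<le> real (cnt N1 C1 k)) \<Longrightarrow>
      approx_odds K \<alpha> P0 w0 w1 N0 N1 C0 C1 > 0 \<and>
      \<bar>ln (post_odds K \<alpha> P0 N0 N1 C0 C1 / approx_odds K \<alpha> P0 w0 w1 N0 N1 C0 C1)\<bar>
        \<le> M * sqrt (real (N0 + N1))"
proof -
  define A where "A = (\<Sum>k\<in>{1..K}. \<alpha> k)"
  define e where "e = (real K - 1) / 2"
  define L where "L = 1 - ln \<delta>"
  define Cc where "Cc = \<bar>ln (P0 / (1 - P0))\<bar> + \<bar>e * ln (lam * (1 - lam) / (2 * pi))\<bar>
    + 3 * (- ln \<delta>) * (A + real K / 2)"
  define C where "C = \<bar>ln (P0 / (1 - P0))\<bar> + \<bar>ln (dir_beta K \<alpha>)\<bar> + Cc"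
  define B where "B = 3 * (2 * real K + 2 * A + 2)"
  have \<alpha>0: "\<And>k. k \<in> {1..K} \<Longrightarrow> \<alpha> k \<ge> 0" using \<alpha> by (simp add: less_imp_le)
  have A: "A \<ge> 0" unfolding A_def using \<alpha>0 by (rule sum_nonneg)
  have "\<delta> \<le> 1" using w[of 1] K by force
  then have "ln \<delta> \<le> 0" using \<delta> by simp
  then have "Cc \<ge> 0" unfolding Cc_def using A by (intro add_nonneg_nonneg mult_nonneg_nonneg) auto
  then have C: "C \<ge> 0" and B: "B \<ge> 0" and L: "L \<ge> 0"
    unfolding C_def B_def L_def using A \<open>ln \<delta> \<le> 0\<close> by simp_all
  show thesis
  proof (rule that[of "C + (B + real K) * (3 + 2 * sqrt A) + 4 * real K * L * T"])
    fix N0 N1 :: nat and C0 C1 :: "nat \<Rightarrow> nat"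
    assume ratio: "real N0 = lam * real (N0 + N1)"
      and typ0: "typical_labels K T w0 N0 C0" and typ1: "typical_labels K T w1 N1 C1"
      and cnt: "\<And>k. k \<in> {1..K} \<Longrightarrow> 2 \<le> cnt N0 C0 k \<and> \<delta> * N0 \<le> real (cnt N0 C0 k)
                           \<and> 2 \<le> cnt N1 C1 k \<and> \<delta> * N1 \<le> real (cnt N1 C1 k)"
    define x where "x = (\<lambda>k. real (cnt N0 C0 k))"
    define y where "y = (\<lambda>k. real (cnt N1 C1 k))"
    define N where "N = real (N0 + N1)"
    define Q where "Q = 1 + ln (N + A)"
    define Gp where "Gp = (\<Sum>k\<in>{1..K}. jensen_gap lam (x k / N0) (y k / N1))"
    define Gw where "Gw = (\<Sum>k\<in>{1..K}. jensen_gap lam (w0 k) (w1 k))"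
    have "(\<Sum>k\<in>{1..K}. cnt N0 C0 k) = N0" "(\<Sum>k\<in>{1..K}. cnt N1 C1 k) = N1"
      using sum_cnt typ0 typ1 unfolding typical_labels_def by blast+
    then have sums: "(\<Sum>k\<in>{1..K}. x k) = real N0" "(\<Sum>k\<in>{1..K}. y k) = real N1"
      unfolding x_def y_def by (simp_all flip: of_nat_sum)
    have N_pos: "N0 > 0" "N1 > 0"
      using cnt[of 1] K cnt_le[of N0 C0 1] cnt_le[of N1 C1 1] by force+
    then have N1: "N \<ge> 1" and N_sum: "real N0 + real N1 = N" and lam: "real N0 / N = lam"
      using ratio by (simp_all add: N_def field_simps)
    have x2: "\<And>k. k \<in> {1..K} \<Longrightarrow> x k \<ge> 2" and y2: "\<And>k. k \<in> {1..K} \<Longrightarrow> y k \<ge> 2"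
      using cnt unfolding x_def y_def by force+
    have freq: "\<And>k. k \<in> {1..K} \<Longrightarrow> \<delta> * N0 \<le> real (cnt N0 C0 k) \<and> \<delta> * N1 \<le> real (cnt N1 C1 k)"
      using cnt by blast
    note c_bound = ln_c_const_bound[where \<alpha> = \<alpha> and ?C0.0 = C0 and ?C1.0 = C1,
        OF \<alpha>0 P0 \<delta> N_pos ratio freq]
    have w_pos: "\<And>k. k \<in> {1..K} \<Longrightarrow> w0 k > 0 \<and> w1 k > 0" using w \<delta> by (force intro: less_le_trans)
    have "N0 + N1 > 0" using N_pos by simp
    note approx = ln_approx_odds[OF this ratio w_pos c_bound(1)]
    have ln_approx: "ln (approx_odds K \<alpha> P0 w0 w1 N0 N1 C0 C1)
        = ln (c_const K \<alpha> P0 N0 N1 C0 C1) + e * ln N - N * Gw"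
      using approx(2) unfolding e_def N_def Gw_def .
    have "ln (post_odds K \<alpha> P0 N0 N1 C0 C1 / approx_odds K \<alpha> P0 w0 w1 N0 N1 C0 C1)
        = ln (post_odds K \<alpha> P0 N0 N1 C0 C1) - ln (approx_odds K \<alpha> P0 w0 w1 N0 N1 C0 C1)"
      using ln_post_odds(1)[OF K \<alpha> P0] approx(1) by (rule ln_divide_pos)
    also have "\<dots> = ln (P0 / (1 - P0)) + ln (dir_beta K \<alpha>) - ln (c_const K \<alpha> P0 N0 N1 C0 C1)
        + (ln (dir_beta K (\<lambda>k. x k + y k + \<alpha> k)) - ln (dir_beta K (\<lambda>k. x k + \<alpha> k))
           - ln (dir_beta K (\<lambda>k. y k + \<alpha> k)) + N * Gp) - (N * Gp - N * Gw) - e * ln N"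
    proof -
      have "ln (post_odds K \<alpha> P0 N0 N1 C0 C1) = ln (P0 / (1 - P0)) + ln (dir_beta K \<alpha>)
         + ln (dir_beta K (\<lambda>k. x k + y k + \<alpha> k)) - ln (dir_beta K (\<lambda>k. x k + \<alpha> k))
         - ln (dir_beta K (\<lambda>k. y k + \<alpha> k))"
        unfolding x_def y_def by (rule ln_post_odds(2)[OF K \<alpha> P0])
      then show ?thesis unfolding ln_approx by simp
    qed
    finally have split: "ln (post_odds K \<alpha> P0 N0 N1 C0 C1 / approx_odds K \<alpha> P0 w0 w1 N0 N1 C0 C1)
        = ln (P0 / (1 - P0)) + ln (dir_beta K \<alpha>) - ln (c_const K \<alpha> P0 N0 N1 C0 C1)
        + (ln (dir_beta K (\<lambda>k. x k + y k + \<alpha> k)) - ln (dir_beta K (\<lambda>k. x k + \<alpha> k))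
           - ln (dir_beta K (\<lambda>k. y k + \<alpha> k)) + N * Gp) - (N * Gp - N * Gw) - e * ln N" .
    have "\<bar>ln (dir_beta K (\<lambda>k. x k + y k + \<alpha> k)) - ln (dir_beta K (\<lambda>k. x k + \<alpha> k))
        - ln (dir_beta K (\<lambda>k. y k + \<alpha> k)) + N * Gp\<bar> \<le> 3 * ((2 * real K + 2 * A + 2) * Q)"
      using ln_dir_beta_ratio_stirling[of K x y \<alpha>, OF K x2 y2 \<alpha>0]
      unfolding sums N_sum lam Gp_def Q_def A_def .
    moreover have "\<bar>N * Gp - N * Gw\<bar> \<le> 4 * real K * L * T * sqrt N"
      using sum_jensen_gap_deviation[OF \<delta> T N_pos ratio typ0 typ1 freq w]
      unfolding Gp_def Gw_def N_def L_def x_def y_def .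
    moreover have "\<bar>ln (c_const K \<alpha> P0 N0 N1 C0 C1)\<bar> \<le> Cc"
      using c_bound(2) unfolding Cc_def A_def e_def .
    moreover have "0 \<le> e * ln N" "e * ln N \<le> real K * Q"
    proof -
      have "0 \<le> e" "e \<le> real K" using K unfolding e_def by simp_all
      moreover have "0 \<le> ln N" "ln N \<le> ln (N + A)" using N1 A by simp_all
      then have "0 \<le> ln N" "ln N \<le> Q" unfolding Q_def by simp_all
      ultimately show "0 \<le> e * ln N" "e * ln N \<le> real K * Q" by (simp_all add: mult_mono)
    qed
    ultimately have "\<bar>ln (post_odds K \<alpha> P0 N0 N1 C0 C1 / approx_odds K \<alpha> P0 w0 w1 N0 N1 C0 C1)\<bar>
        \<le> C + (B + real K) * Q + 4 * real K * L * T * sqrt N"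
      unfolding split C_def B_def abs_le_iff by (simp add: algebra_simps) linarith
    also have "\<dots> \<le> C * sqrt N + (B + real K) * ((3 + 2 * sqrt A) * sqrt N) + 4 * real K * L * T * sqrt N"
      using C B L T N1 mult_left_mono[of 1 "sqrt N" C] one_plus_ln_le_sqrt[OF N1 A]
      by (intro add_mono mult_left_mono) (auto simp: Q_def)
    finally show "approx_odds K \<alpha> P0 w0 w1 N0 N1 C0 C1 > 0 \<and>
      \<bar>ln (post_odds K \<alpha> P0 N0 N1 C0 C1 / approx_odds K \<alpha> P0 w0 w1 N0 N1 C0 C1)\<bar>
        \<le> (C + (B + real K) * (3 + 2 * sqrt A) + 4 * real K * L * T) * sqrt (real (N0 + N1))"
      using approx(1) unfolding N_def by (simp add: algebra_simps)
  qed
qed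

lemma approx_odds_error_bound_typical:
  fixes T lam :: real
  assumes K: "K \<ge> 1" and \<alpha>: "\<And>k. k \<in> {1..K} \<Longrightarrow> \<alpha> k > 0" and P0: "0 < P0" "P0 < 1"
    and w0: "\<And>k. k \<in> {1..K} \<Longrightarrow> w0 k > 0" "(\<Sum>k\<in>{1..K}. w0 k) = 1"
    and w1: "\<And>k. k \<in> {1..K} \<Longrightarrow> w1 k > 0" "(\<Sum>k\<in>{1..K}. w1 k) = 1"
    and T: "T \<ge> 0"
  obtains M X where "\<And>N0 N1 C0 C1. X \<le> real N0 \<Longrightarrow> X \<le> real N1 \<Longrightarrow>
      real N0 = lam * real (N0 + N1) \<Longrightarrow>
      typical_labels K T w0 N0 C0 \<Longrightarrow> typical_labels K T w1 N1 C1 \<Longrightarrow>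
      approx_odds K \<alpha> P0 w0 w1 N0 N1 C0 C1 > 0 \<and>
      \<bar>ln (post_odds K \<alpha> P0 N0 N1 C0 C1 / approx_odds K \<alpha> P0 w0 w1 N0 N1 C0 C1)\<bar>
        \<le> M * sqrt (real (N0 + N1))"
proof -
  define W where "W = (\<lambda>k. min (w0 k) (w1 k)) ` {1..K}"
  define \<delta> where "\<delta> = Min W / 2"
  have W: "finite W" "W \<noteq> {}" unfolding W_def using K by auto
  have "0 < Min W" using w0(1) w1(1) by (subst Min_gr_iff[OF W]) (auto simp: W_def)
  then have "\<delta> > 0" unfolding \<delta>_def by simp
  have w_ge: "2 * \<delta> \<le> w0 k \<and> 2 * \<delta> \<le> w1 k" if "k \<in> {1..K}" for k
    using Min_le[OF W(1), of "min (w0 k) (w1 k)"] that unfolding \<delta>_def W_def by auto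
  have "\<delta> \<le> w0 k \<and> w0 k \<le> 1 \<and> \<delta> \<le> w1 k \<and> w1 k \<le> 1" if "k \<in> {1..K}" for k
    using w_ge[OF that] weight_le_one[OF w0 that] weight_le_one[OF w1 that] \<open>\<delta> > 0\<close> by auto
  then obtain M where M: "\<And>N0 N1 C0 C1. real N0 = lam * real (N0 + N1) \<Longrightarrow>
      typical_labels K T w0 N0 C0 \<Longrightarrow> typical_labels K T w1 N1 C1 \<Longrightarrow>
      (\<And>k. k \<in> {1..K} \<Longrightarrow> 2 \<le> cnt N0 C0 k \<and> \<delta> * N0 \<le> real (cnt N0 C0 k)
                           \<and> 2 \<le> cnt N1 C1 k \<and> \<delta> * N1 \<le> real (cnt N1 C1 k)) \<Longrightarrow>
      approx_odds K \<alpha> P0 w0 w1 N0 N1 C0 C1 > 0 \<and>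
      \<bar>ln (post_odds K \<alpha> P0 N0 N1 C0 C1 / approx_odds K \<alpha> P0 w0 w1 N0 N1 C0 C1)\<bar>
        \<le> M * sqrt (real (N0 + N1))"
    using approx_odds_error_bound[where \<alpha> = \<alpha> and ?w0.0 = w0 and ?w1.0 = w1 and lam = lam,
        OF K \<alpha> P0 \<open>\<delta> > 0\<close> T] by blast
  show thesis
  proof (rule that[where M = M and X = "(T / \<delta>)\<^sup>2 + 2 / \<delta>"])
    fix N0 N1 :: nat and C0 C1 :: "nat \<Rightarrow> nat"
    assume N0: "(T / \<delta>)\<^sup>2 + 2 / \<delta> \<le> real N0" and N1: "(T / \<delta>)\<^sup>2 + 2 / \<delta> \<le> real N1"
      and ratio: "real N0 = lam * real (N0 + N1)"
      and typ0: "typical_labels K T w0 N0 C0" and typ1: "typical_labels K T w1 N1 C1"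
    have large: "(T / \<delta>)\<^sup>2 \<le> n \<and> 2 \<le> \<delta> * n" if "(T / \<delta>)\<^sup>2 + 2 / \<delta> \<le> n" for n
    proof -
      have "0 \<le> (T / \<delta>)\<^sup>2" "0 < 2 / \<delta>" using \<open>\<delta> > 0\<close> by simp_all
      then have "(T / \<delta>)\<^sup>2 \<le> n" "2 / \<delta> \<le> n" using that by linarith+
      then show ?thesis using \<open>\<delta> > 0\<close> by (simp add: pos_divide_le_eq mult.commute)
    qed
    have "2 \<le> cnt N0 C0 k \<and> \<delta> * N0 \<le> real (cnt N0 C0 k)
        \<and> 2 \<le> cnt N1 C1 k \<and> \<delta> * N1 \<le> real (cnt N1 C1 k)" if k: "k \<in> {1..K}" for k
    proof -
      have "\<bar>real (cnt N0 C0 k) - real N0 * w0 k\<bar> \<le> T * sqrt (real N0)"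
        "\<bar>real (cnt N1 C1 k) - real N1 * w1 k\<bar> \<le> T * sqrt (real N1)"
        using typ0 typ1 k unfolding typical_labels_def by blast+
      then have "\<delta> * N0 \<le> real (cnt N0 C0 k)" "\<delta> * N1 \<le> real (cnt N1 C1 k)"
        using w_ge[OF k] large[OF N0] large[OF N1] \<open>\<delta> > 0\<close> T
        by (blast intro: deviation_lower_bound)+
      moreover from this have "2 \<le> real (cnt N0 C0 k)" "2 \<le> real (cnt N1 C1 k)"
        using large[OF N0] large[OF N1] by linarith+
      ultimately show ?thesis by simp
    qed
    then show "approx_odds K \<alpha> P0 w0 w1 N0 N1 C0 C1 > 0 \<and>
      \<bar>ln (post_odds K \<alpha> P0 N0 N1 C0 C1 / approx_odds K \<alpha> P0 w0 w1 N0 N1 C0 C1)\<bar>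
        \<le> M * sqrt (real (N0 + N1))"
      by (rule M[OF ratio typ0 typ1])
  qed
qed

section \<open>Concentration under H1\<close>

lemma pmf_cat_pmf:
  assumes w: "\<And>k. k \<in> {1..K} \<Longrightarrow> w k > 0" and s: "(\<Sum>k\<in>{1..K}. w k) = 1"
  shows "pmf (cat_pmf K w) x = (if x \<in> {1..K} then w x else 0)"
proof -
  have nn: "\<And>x. 0 \<le> (if x \<in> {1..K} then w x else 0)" using w by (auto intro: less_imp_le)
  have "(\<integral>\<^sup>+x. ennreal (if x \<in> {1..K} then w x else 0) \<partial>count_space UNIV)
        = (\<Sum>x\<in>{1..K}. ennreal (if x \<in> {1..K} then w x else 0))"
    by (intro nn_integral_count_space') auto
  also have "\<dots> = ennreal (\<Sum>x\<in>{1..K}. w x)"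
    using w by (subst sum_ennreal) (auto intro: less_imp_le)
  finally have "(\<integral>\<^sup>+x. ennreal (if x \<in> {1..K} then w x else 0) \<partial>count_space UNIV) = 1"
    using s by simp
  then show ?thesis unfolding cat_pmf_def using nn by (subst pmf_embed_pmf) auto
qed

lemma set_pmf_cat_pmf:
  assumes "\<And>k. k \<in> {1..K} \<Longrightarrow> w k > 0" "(\<Sum>k\<in>{1..K}. w k) = 1"
  shows "set_pmf (cat_pmf K w) \<subseteq> {1..K}"
  using pmf_cat_pmf[OF assms] by (auto simp: set_pmf_eq split: if_splits)

lemma cnt_distribution:
  assumes w: "\<And>k. k \<in> {1..K} \<Longrightarrow> w k > 0" and s: "(\<Sum>k\<in>{1..K}. w k) = 1"
    and k: "k \<in> {1..K}"
  shows "map_pmf (\<lambda>C. cnt N C k) (Pi_pmf {0..<N} 0 (\<lambda>_. cat_pmf K w)) = binomial_pmf N (w k)"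
proof -
  have wk: "w k \<in> {0..1}" using w[OF k] weight_le_one[OF w s k] by auto
  have "map_pmf (\<lambda>c. c = k) (cat_pmf K w) = bernoulli_pmf (w k)"
  proof (rule pmf_eqI)
    fix b :: bool
    have "measure_pmf.prob (cat_pmf K w) {k} = w k"
      using pmf_cat_pmf[OF w s, of k] k by (simp add: measure_pmf_single)
    moreover have "(\<lambda>c. c = k) -` {True} = {k}" "(\<lambda>c. c = k) -` {False} = - {k}" by auto
    ultimately show "pmf (map_pmf (\<lambda>c. c = k) (cat_pmf K w)) b = pmf (bernoulli_pmf (w k)) b"
      using wk measure_pmf.prob_compl[of "{k}" "cat_pmf K w"]
      by (cases b) (simp_all add: pmf_map Compl_eq_Diff_UNIV)
  qed
  then have "Pi_pmf {0..<N} False (\<lambda>_. bernoulli_pmf (w k))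
      = Pi_pmf {0..<N} False (\<lambda>_. map_pmf (\<lambda>c. c = k) (cat_pmf K w))" by simp
  also have "\<dots> = map_pmf ((\<circ>) (\<lambda>c. c = k)) (Pi_pmf {0..<N} 0 (\<lambda>_. cat_pmf K w))"
    using k by (intro Pi_pmf_map) auto
  finally have "Pi_pmf {0..<N} False (\<lambda>_. bernoulli_pmf (w k))
      = map_pmf ((\<circ>) (\<lambda>c. c = k)) (Pi_pmf {0..<N} 0 (\<lambda>_. cat_pmf K w))" .
  moreover have "binomial_pmf N (w k)
      = map_pmf (\<lambda>f. card {x \<in> {0..<N}. f x}) (Pi_pmf {0..<N} False (\<lambda>_. bernoulli_pmf (w k)))"
    using wk by (intro binomial_pmf_altdef') auto
  ultimately show ?thesis by (simp add: pmf.map_comp o_def cnt_def)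
qed

lemma prob_cnt_deviation:
  assumes "\<And>k. k \<in> {1..K} \<Longrightarrow> w k > 0" "(\<Sum>k\<in>{1..K}. w k) = 1"
    and k: "k \<in> {1..K}" and N: "N > 0" and T: "T \<ge> 0"
  shows "measure_pmf.prob (Pi_pmf {0..<N} 0 (\<lambda>_. cat_pmf K w))
           {C. T * sqrt (real N) \<le> \<bar>real (cnt N C k) - real N * w k\<bar>} \<le> 2 * exp (- 2 * T\<^sup>2)"
proof -
  have wk: "w k \<in> {0..1}" using assms(1)[OF k] weight_le_one[OF assms(1,2) k] by auto
  have "measure_pmf.prob (Pi_pmf {0..<N} 0 (\<lambda>_. cat_pmf K w))
           {C. T * sqrt (real N) \<le> \<bar>real (cnt N C k) - real N * w k\<bar>}
      = measure_pmf.prob (map_pmf (\<lambda>C. cnt N C k) (Pi_pmf {0..<N} 0 (\<lambda>_. cat_pmf K w)))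
           {c. T * sqrt (real N) \<le> \<bar>real c - real N * w k\<bar>}"
    by (simp add: vimage_def)
  also have "\<dots> = measure_pmf.prob (binomial_pmf N (w k))
           {c. T * sqrt (real N) \<le> \<bar>real c - real N * w k\<bar>}"
    by (simp only: cnt_distribution[OF assms(1,2) k])
  also have "\<dots> \<le> 2 * exp (- 2 * (T * sqrt (real N))\<^sup>2 / real N)"
    using wk N T by (intro binomial_distribution.prob_abs_ge) (auto simp: binomial_distribution_def)
  also have "\<dots> = 2 * exp (- 2 * T\<^sup>2)" using N by (simp add: power_mult_distrib)
  finally show ?thesis .
qed

lemma prob_not_typical_labels:
  assumes w: "\<And>k. k \<in> {1..K} \<Longrightarrow> w k > 0" "(\<Sum>k\<in>{1..K}. w k) = 1" and T: "T \<ge> 0"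
  shows "measure_pmf.prob (Pi_pmf {0..<N} 0 (\<lambda>_. cat_pmf K w)) {C. \<not> typical_labels K T w N C}
           \<le> 2 * real K * exp (- 2 * T\<^sup>2)"
proof (cases "N = 0")
  case True
  then show ?thesis by (simp add: typical_labels_def cnt_def)
next
  case False
  define P where "P = Pi_pmf {0..<N} 0 (\<lambda>_. cat_pmf K w)"
  define D where "D = (\<lambda>k. {C. T * sqrt (real N) \<le> \<bar>real (cnt N C k) - real N * w k\<bar>})"
  have "set_pmf P \<inter> {C. \<not> (\<forall>j<N. C j \<in> {1..K})} = {}"
    using set_pmf_cat_pmf[OF w] unfolding P_def by (auto simp: set_Pi_pmf PiE_dflt_def)
  then have outside: "measure_pmf.prob P {C. \<not> (\<forall>j<N. C j \<in> {1..K})} = 0"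
    by (subst measure_pmf_zero_iff)
  have "measure_pmf.prob P {C. \<not> typical_labels K T w N C}
      \<le> measure_pmf.prob P ((\<Union>k\<in>{1..K}. D k) \<union> {C. \<not> (\<forall>j<N. C j \<in> {1..K})})"
    by (rule measure_pmf.finite_measure_mono) (auto simp: typical_labels_def D_def)
  also have "\<dots> \<le> measure_pmf.prob P (\<Union>k\<in>{1..K}. D k) + measure_pmf.prob P {C. \<not> (\<forall>j<N. C j \<in> {1..K})}"
    by (rule measure_subadditive) (auto simp: measure_pmf.emeasure_finite)
  also have "measure_pmf.prob P (\<Union>k\<in>{1..K}. D k) \<le> (\<Sum>k\<in>{1..K}. measure_pmf.prob P (D k))"
    by (rule measure_pmf.finite_measure_subadditive_finite) auto
  also have "\<dots> \<le> (\<Sum>k\<in>{1..K}. 2 * exp (- 2 * T\<^sup>2))"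
    unfolding P_def D_def using w False T by (intro sum_mono prob_cnt_deviation) auto
  finally show ?thesis using outside by (simp add: P_def)
qed

lemma prob_sample_H1_not_typical:
  assumes w0: "\<And>k. k \<in> {1..K} \<Longrightarrow> w0 k > 0" "(\<Sum>k\<in>{1..K}. w0 k) = 1"
    and w1: "\<And>k. k \<in> {1..K} \<Longrightarrow> w1 k > 0" "(\<Sum>k\<in>{1..K}. w1 k) = 1" and T: "T \<ge> 0"
  shows "measure_pmf.prob (sample_H1 K N0 N1 w0 w1)
           {(C0, C1). \<not> (typical_labels K T w0 N0 C0 \<and> typical_labels K T w1 N1 C1)}
           \<le> 4 * real K * exp (- 2 * T\<^sup>2)"
proof -
  define P where "P = sample_H1 K N0 N1 w0 w1"
  have marginal: "measure_pmf.prob P {p. \<not> typical_labels K T w0 N0 (fst p)}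
        = measure_pmf.prob (Pi_pmf {0..<N0} 0 (\<lambda>_. cat_pmf K w0)) {C. \<not> typical_labels K T w0 N0 C}"
      "measure_pmf.prob P {p. \<not> typical_labels K T w1 N1 (snd p)}
        = measure_pmf.prob (Pi_pmf {0..<N1} 0 (\<lambda>_. cat_pmf K w1)) {C. \<not> typical_labels K T w1 N1 C}"
  proof -
    have "measure_pmf.prob P {p. \<not> typical_labels K T w0 N0 (fst p)}
        = measure_pmf.prob (map_pmf fst P) {C. \<not> typical_labels K T w0 N0 C}"
      "measure_pmf.prob P {p. \<not> typical_labels K T w1 N1 (snd p)}
        = measure_pmf.prob (map_pmf snd P) {C. \<not> typical_labels K T w1 N1 C}"
      by (simp_all add: vimage_def)
    then show "measure_pmf.prob P {p. \<not> typical_labels K T w0 N0 (fst p)}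
        = measure_pmf.prob (Pi_pmf {0..<N0} 0 (\<lambda>_. cat_pmf K w0)) {C. \<not> typical_labels K T w0 N0 C}"
      "measure_pmf.prob P {p. \<not> typical_labels K T w1 N1 (snd p)}
        = measure_pmf.prob (Pi_pmf {0..<N1} 0 (\<lambda>_. cat_pmf K w1)) {C. \<not> typical_labels K T w1 N1 C}"
      unfolding P_def sample_H1_def by (simp_all add: map_fst_pair_pmf map_snd_pair_pmf)
  qed
  have "measure_pmf.prob P {(C0, C1). \<not> (typical_labels K T w0 N0 C0 \<and> typical_labels K T w1 N1 C1)}
      \<le> measure_pmf.prob P {p. \<not> typical_labels K T w0 N0 (fst p)}
        + measure_pmf.prob P {p. \<not> typical_labels K T w1 N1 (snd p)}"
    by (rule order_trans[OF measure_pmf.finite_measure_mono measure_subadditive])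
       (auto simp: measure_pmf.emeasure_finite)
  also have "\<dots> \<le> 2 * real K * exp (- 2 * T\<^sup>2) + 2 * real K * exp (- 2 * T\<^sup>2)"
    unfolding marginal using prob_not_typical_labels[OF w0 T] prob_not_typical_labels[OF w1 T]
    by (rule add_mono)
  finally show ?thesis unfolding P_def by simp
qed

definition approx_failure :: "nat \<Rightarrow> (nat \<Rightarrow> real) \<Rightarrow> real \<Rightarrow> (nat \<Rightarrow> real) \<Rightarrow> (nat \<Rightarrow> real)
    \<Rightarrow> real \<Rightarrow> nat \<Rightarrow> nat \<Rightarrow> ((nat \<Rightarrow> nat) \<times> (nat \<Rightarrow> nat)) set" where
  "approx_failure K \<alpha> P0 w0 w1 M N0 N1 =
     {(C0, C1). \<not> (approx_odds K \<alpha> P0 w0 w1 N0 N1 C0 C1 > 0 \<and>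
        \<bar>ln (post_odds K \<alpha> P0 N0 N1 C0 C1 / approx_odds K \<alpha> P0 w0 w1 N0 N1 C0 C1)\<bar>
          \<le> M * sqrt (real (N0 + N1)))}"

lemma prob_approx_failure_le:
  fixes T lam :: real
  assumes K: "K \<ge> 1" and \<alpha>: "\<And>k. k \<in> {1..K} \<Longrightarrow> \<alpha> k > 0" and P0: "0 < P0" "P0 < 1"
    and w0: "\<And>k. k \<in> {1..K} \<Longrightarrow> w0 k > 0" "(\<Sum>k\<in>{1..K}. w0 k) = 1"
    and w1: "\<And>k. k \<in> {1..K} \<Longrightarrow> w1 k > 0" "(\<Sum>k\<in>{1..K}. w1 k) = 1"
    and T: "T \<ge> 0"
  obtains M X where "\<And>N0 N1. X \<le> real N0 \<Longrightarrow> X \<le> real N1 \<Longrightarrow> real N0 = lam * real (N0 + N1) \<Longrightarrow>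
      measure_pmf.prob (sample_H1 K N0 N1 w0 w1) (approx_failure K \<alpha> P0 w0 w1 M N0 N1)
        \<le> 4 * real K * exp (- 2 * T\<^sup>2)"
proof (rule approx_odds_error_bound_typical[where \<alpha> = \<alpha> and ?w0.0 = w0 and ?w1.0 = w1 and lam = lam,
      OF K \<alpha> P0 w0 w1 T])
  fix M X
  assume MX: "\<And>N0 N1 C0 C1. X \<le> real N0 \<Longrightarrow> X \<le> real N1 \<Longrightarrow>
      real N0 = lam * real (N0 + N1) \<Longrightarrow>
      typical_labels K T w0 N0 C0 \<Longrightarrow> typical_labels K T w1 N1 C1 \<Longrightarrow>
      approx_odds K \<alpha> P0 w0 w1 N0 N1 C0 C1 > 0 \<and>
      \<bar>ln (post_odds K \<alpha> P0 N0 N1 C0 C1 / approx_odds K \<alpha> P0 w0 w1 N0 N1 C0 C1)\<bar>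
        \<le> M * sqrt (real (N0 + N1))"
  show thesis
  proof (rule that[where M = M and X = X])
    fix N0 N1 :: nat
    assume "X \<le> real N0" "X \<le> real N1" "real N0 = lam * real (N0 + N1)"
    then have "approx_failure K \<alpha> P0 w0 w1 M N0 N1
        \<subseteq> {(C0, C1). \<not> (typical_labels K T w0 N0 C0 \<and> typical_labels K T w1 N1 C1)}"
      using MX unfolding approx_failure_def by blast
    then have "measure_pmf.prob (sample_H1 K N0 N1 w0 w1) (approx_failure K \<alpha> P0 w0 w1 M N0 N1)
        \<le> measure_pmf.prob (sample_H1 K N0 N1 w0 w1)
             {(C0, C1). \<not> (typical_labels K T w0 N0 C0 \<and> typical_labels K T w1 N1 C1)}"
      by (rule measure_pmf.finite_measure_mono) simp
    also have "\<dots> \<le> 4 * real K * exp (- 2 * T\<^sup>2)"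
      by (rule prob_sample_H1_not_typical[OF w0 w1 T])
    finally show "measure_pmf.prob (sample_H1 K N0 N1 w0 w1) (approx_failure K \<alpha> P0 w0 w1 M N0 N1)
        \<le> 4 * real K * exp (- 2 * T\<^sup>2)" .
  qed
qed

theorem corollary2:
  fixes K :: nat and \<alpha> w0 w1 :: "nat \<Rightarrow> real" and P0 lam0 :: real
    and N0 N1 :: "nat \<Rightarrow> nat"
  assumes K: "K \<ge> 2"
    and alpha_pos: "\<And>k. k \<in> {1..K} \<Longrightarrow> \<alpha> k > 0"
    and P0: "0 < P0" "P0 < 1"
    and lam: "0 < lam0" "lam0 < 1"
    and w0_pos: "\<And>k. k \<in> {1..K} \<Longrightarrow> w0 k > 0"
    and w1_pos: "\<And>k. k \<in> {1..K} \<Longrightarrow> w1 k > 0"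
    and w0_sum: "(\<Sum>k\<in>{1..K}. w0 k) = 1"
    and w1_sum: "(\<Sum>k\<in>{1..K}. w1 k) = 1"
    and neq: "\<exists>k\<in>{1..K}. w0 k \<noteq> w1 k"
    and N0_lim: "filterlim N0 at_top sequentially"
    and N1_lim: "filterlim N1 at_top sequentially"
    and ratio: "\<And>n. real (N0 n) = lam0 * real (N0 n + N1 n)"
  shows "\<forall>\<epsilon>>0. \<exists>M. \<forall>\<^sub>F n in sequentially.
           measure_pmf.prob (sample_H1 K (N0 n) (N1 n) w0 w1)
             {(C0, C1). \<not> (approx_odds K \<alpha> P0 w0 w1 (N0 n) (N1 n) C0 C1 > 0 \<and>
                 \<bar>ln (post_odds K \<alpha> P0 (N0 n) (N1 n) C0 C1
                       / approx_odds K \<alpha> P0 w0 w1 (N0 n) (N1 n) C0 C1)\<bar>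
                   \<le> M * sqrt (real (N0 n + N1 n)))} < \<epsilon>"
  unfolding approx_failure_def[symmetric]
proof (intro allI impI)
  fix \<epsilon> :: real
  assume "\<epsilon> > 0"
  have "((\<lambda>T. 4 * real K * exp (- 2 * T\<^sup>2)) \<longlongrightarrow> 0) at_top" by real_asymp
  then have "\<forall>\<^sub>F T in at_top. 0 \<le> T \<and> 4 * real K * exp (- 2 * T\<^sup>2) < \<epsilon>"
    using \<open>\<epsilon> > 0\<close> by (intro eventually_conj eventually_ge_at_top order_tendstoD(2))
  then obtain T where T: "0 \<le> T" "4 * real K * exp (- 2 * T\<^sup>2) < \<epsilon>"
    by (auto simp: eventually_at_top_linorder)
  have "K \<ge> 1" using K by simp
  show "\<exists>M. \<forall>\<^sub>F n in sequentially.
      measure_pmf.prob (sample_H1 K (N0 n) (N1 n) w0 w1) (approx_failure K \<alpha> P0 w0 w1 M (N0 n) (N1 n)) < \<epsilon>"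
  proof (rule prob_approx_failure_le[OF \<open>K \<ge> 1\<close> alpha_pos P0 w0_pos w0_sum w1_pos w1_sum T(1)])
    fix M X
    assume MX: "\<And>N0 N1. X \<le> real N0 \<Longrightarrow> X \<le> real N1 \<Longrightarrow> real N0 = lam0 * real (N0 + N1) \<Longrightarrow>
      measure_pmf.prob (sample_H1 K N0 N1 w0 w1) (approx_failure K \<alpha> P0 w0 w1 M N0 N1)
        \<le> 4 * real K * exp (- 2 * T\<^sup>2)"
    have "\<forall>\<^sub>F n in sequentially. X \<le> real (N0 n)" "\<forall>\<^sub>F n in sequentially. X \<le> real (N1 n)"
      using filterlim_compose[OF filterlim_real_sequentially N0_lim]
        filterlim_compose[OF filterlim_real_sequentially N1_lim]
      by (simp_all add: filterlim_at_top)
    then have "\<forall>\<^sub>F n in sequentially.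
        measure_pmf.prob (sample_H1 K (N0 n) (N1 n) w0 w1) (approx_failure K \<alpha> P0 w0 w1 M (N0 n) (N1 n)) < \<epsilon>"
    proof eventually_elim
      case (elim n)
      then show ?case using MX[OF _ _ ratio] T(2) by (meson le_less_trans)
    qed
    then show ?thesis by (rule exI)
  qed
qed

end
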